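(* Let $\Delta=6$ and $\delta=9789/10000$. Define $K^{(1)}_\delta=1$, $K^{(2)}_\delta=1069/1000$, $K^{(3)}_\delta=1160/1000$, $K^{(4)}_\delta=1225/1000$, and $K^{(w)}_\delta=(1/\delta)^{(w-1)(\Delta-1)}$ for $w\ge 5$. Then for every positive integer $w$ and all $t_1,\dots,t_w\in[0,1/2]$, \[\sum_{j=1}^{w}\frac{1}{\delta^{(j-1)(\Delta-1)}}\,h(t_j)\le w\,K^{(w)}_\delta\,h(t),\] where $t=(t_1\cdots t_w)^{1/w}$ is the geometric mean of the $t_j$.
   Context: $h(t)=(1-t)\left[\psi-\left(\frac{t}{1-t}\right)^{\chi}\right]$ for $t\in[0,1/2]$, with $\psi=13/10$ and $\chi=1/2$. *)

theory Defs
  imports Complex_Main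
begin

definition psi :: real where "psi = 13/10"
definition chi :: real where "chi = 1/2"

definition h :: "real \<Rightarrow> real" where
  "h t = (1 - t) * (psi - (t / (1 - t)) powr chi)"

definition Delta :: nat where "Delta = 6"
definition delta :: real where "delta = 9789/10000"

definition K :: "nat \<Rightarrow> real" where
  "K w = (if w = 1 then 1
          else if w = 2 then 1069/1000
          else if w = 3 then 1160/1000
          else if w = 4 then 1225/1000
          else (1 / delta) ^ ((w - 1) * (Delta - 1)))"

end

theory Submission
  imports Defs
begin

text \<open>Write \<open>tau x = x\<^sup>2 / (1 + x\<^sup>2)\<close>. The substitution \<open>t = tau x\<close>, \<open>x \<in> [0, 1]\<close>, turns
  \<open>h t\<close> into the rational function \<open>phi x = (psi - x) / (1 + x\<^sup>2)\<close>, and the geometric mean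
  of the \<open>t\<^sub>j\<close> into \<open>tau y\<close> with \<open>\<Prod>\<^sub>j tau x\<^sub>j = (tau y)\<^sup>w\<close>. As a function of \<open>ln (tau x)\<close>,
  \<open>phi\<close> is concave on \<open>[0, 1]\<close>, so Jensen's inequality gives the claim whenever every weight
  is at most \<open>K w\<close>, i.e. for \<open>w = 1\<close> and \<open>w \<ge> 5\<close>.

  For \<open>w = 2, 3, 4\<close> the range of \<open>y\<close> is cut into finitely many cells, each with an exact
  rational certificate: tangent lines at points \<open>\<xi>\<^sub>j\<close> bound the concave summands shifted by a
  Lagrange multiplier \<open>\<mu>\<close> for the constraint, the shifted right-hand side is quasi-concave in
  \<open>y\<close> and hence only needs checking at the two ends of the cell, and \<open>ln\<close> is replaced by
  rational upper and lower bounds. Near \<open>y = 0\<close> the crude bound \<open>phi \<le> psi\<close> suffices.\<close>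

context
  fixes F g p :: "real \<Rightarrow> real" and a b :: real
  assumes has_derivative: "\<And>z. a \<le> z \<Longrightarrow> z \<le> b \<Longrightarrow> (F has_real_derivative g z * p z) (at z)"
    and factor_pos: "\<And>z. a \<le> z \<Longrightarrow> z \<le> b \<Longrightarrow> 0 < p z"
    and factor_antitone: "\<And>u v. a \<le> u \<Longrightarrow> u \<le> v \<Longrightarrow> v \<le> b \<Longrightarrow> g v \<le> g u"
begin

lemma le_at_nonneg_factor:
  assumes "0 \<le> g y" "a \<le> u" "u \<le> y" "y \<le> b"
  shows "F u \<le> F y"
proof (rule DERIV_nonneg_imp_nondecreasing[OF assms(3)])
  fix z assume "u \<le> z" "z \<le> y"
  with assms have "0 \<le> g z * p z"
    using factor_antitone[of z y] factor_pos[of z] by (simp add: zero_le_mult_iff)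
  with \<open>u \<le> z\<close> \<open>z \<le> y\<close> show "\<exists>d. (F has_real_derivative d) (at z) \<and> 0 \<le> d"
    using assms has_derivative by (meson order_trans)
qed

lemma le_at_nonpos_factor:
  assumes "g y \<le> 0" "a \<le> y" "y \<le> u" "u \<le> b"
  shows "F u \<le> F y"
proof (rule DERIV_nonpos_imp_nonincreasing[OF assms(3)])
  fix z assume "y \<le> z" "z \<le> u"
  with assms have "g z * p z \<le> 0"
    using factor_antitone[of y z] factor_pos[of z] by (simp add: mult_le_0_iff)
  with \<open>y \<le> z\<close> \<open>z \<le> u\<close> show "\<exists>d. (F has_real_derivative d) (at z) \<and> d \<le> 0"
    using assms has_derivative by (meson order_trans)
qed

lemma le_at_zero_of_factor:
  assumes "g y = 0" "a \<le> u" "u \<le> b" "a \<le> y" "y \<le> b"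
  shows "F u \<le> F y"
  using assms le_at_nonneg_factor[of y u] le_at_nonpos_factor[of y u] by (cases "u \<le> y") auto

lemma min_endpoints_le:
  assumes "a \<le> y" "y \<le> b"
  shows "min (F a) (F b) \<le> F y"
  using assms le_at_nonneg_factor[of y a] le_at_nonpos_factor[of y b]
  by (cases "0 \<le> g y") (auto simp: min_le_iff_disj)

end

definition ln_upper :: "real \<Rightarrow> real" where
  "ln_upper r = (r - 1 / r) / 2"

definition ln_lower :: "real \<Rightarrow> real" where
  "ln_lower r = (if 1 \<le> r then 2 * (r - 1) / (r + 1) else ln_upper r)"

lemma ln_le_ln_upper:
  assumes "1 \<le> r"
  shows "ln r \<le> ln_upper r"
proof -
  have "ln r - ln_upper r \<le> ln 1 - ln_upper 1"
  proof (rule DERIV_nonpos_imp_nonincreasing[OF assms, where f = "\<lambda>r. ln r - ln_upper r"])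
    fix z :: real assume z: "1 \<le> z" "z \<le> r"
    then have "((\<lambda>r. ln r - ln_upper r) has_real_derivative 1 / z - (1 + 1 / z\<^sup>2) / 2) (at z)"
      unfolding ln_upper_def by (auto intro!: derivative_eq_intros simp: power2_eq_square)
    moreover have "1 / z - (1 + 1 / z\<^sup>2) / 2 = - ((z - 1)\<^sup>2 / (2 * z\<^sup>2))"
      using z by (simp add: field_simps power2_eq_square)
    ultimately show "\<exists>d. ((\<lambda>r. ln r - ln_upper r) has_real_derivative d) (at z) \<and> d \<le> 0"
      by fastforce
  qed
  then show ?thesis
    by (simp add: ln_upper_def)
qed

lemma ln_lower_le_ln:
  assumes "0 < r"
  shows "ln_lower r \<le> ln r"
proof (cases "1 \<le> r")
  case True
  have "ln 1 - 2 * (1 - 1) / (1 + 1) \<le> ln r - 2 * (r - 1) / (r + 1)"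
  proof (rule DERIV_nonneg_imp_nondecreasing[OF True, where f = "\<lambda>r. ln r - 2 * (r - 1) / (r + 1)"])
    fix z :: real assume z: "1 \<le> z" "z \<le> r"
    then have "((\<lambda>r. ln r - 2 * (r - 1) / (r + 1)) has_real_derivative
        1 / z - (2 * (z + 1) - 2 * (z - 1)) / (z + 1)\<^sup>2) (at z)"
      by (auto intro!: derivative_eq_intros simp: power2_eq_square)
    moreover have "1 / z - (2 * (z + 1) - 2 * (z - 1)) / (z + 1)\<^sup>2 = (z - 1)\<^sup>2 / (z * (z + 1)\<^sup>2)"
      using z by (simp add: divide_simps) algebra
    ultimately show "\<exists>d. ((\<lambda>r. ln r - 2 * (r - 1) / (r + 1)) has_real_derivative d) (at z) \<and> 0 \<le> d"
      using z by fastforce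
  qed
  with True show ?thesis
    by (simp add: ln_lower_def)
next
  case False
  then have "ln (1 / r) \<le> ln_upper (1 / r)"
    using assms by (intro ln_le_ln_upper) simp
  moreover have "ln (1 / r) = - ln r" "ln_upper (1 / r) = - ln_upper r"
    using assms by (simp_all add: ln_div ln_upper_def field_simps)
  ultimately show ?thesis
    using False by (simp add: ln_lower_def)
qed

definition tau :: "real \<Rightarrow> real" where
  "tau x = x\<^sup>2 / (1 + x\<^sup>2)"

definition tau_inv :: "real \<Rightarrow> real" where
  "tau_inv t = sqrt (t / (1 - t))"

definition phi :: "real \<Rightarrow> real" where
  "phi x = (psi - x) / (1 + x\<^sup>2)"

text \<open>The derivative of \<open>phi\<close> with respect to \<open>ln (tau x)\<close>.\<close>
definition phi_slope :: "real \<Rightarrow> real" where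
  "phi_slope x = x * (x\<^sup>2 - 2 * psi * x - 1) / (2 * (1 + x\<^sup>2))"

lemma one_plus_square_pos: "0 < 1 + x\<^sup>2" for x :: real
  by (simp add: add_pos_nonneg)

lemma tau_pos: "0 < x \<Longrightarrow> 0 < tau x"
  unfolding tau_def using one_plus_square_pos[of x] by simp

lemma tau_le_half: "0 \<le> x \<Longrightarrow> x \<le> 1 \<Longrightarrow> tau x \<le> 1/2"
  unfolding tau_def using one_plus_square_pos[of x]
  by (simp add: field_simps power2_eq_square mult_le_one)

lemma tau_eq_zero_iff: "tau x = 0 \<longleftrightarrow> x = 0"
  unfolding tau_def using one_plus_square_pos[of x] by simp

lemma
  assumes "0 \<le> t" "t \<le> 1/2"
  shows tau_inv_nonneg: "0 \<le> tau_inv t"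
    and tau_inv_le_one: "tau_inv t \<le> 1"
    and tau_tau_inv: "tau (tau_inv t) = t"
    and h_eq_phi_tau_inv: "h t = phi (tau_inv t)"
proof -
  have odds: "0 \<le> t / (1 - t)" "t / (1 - t) \<le> 1"
    using assms by (auto simp: field_simps)
  then have square: "(tau_inv t)\<^sup>2 = t / (1 - t)"
    unfolding tau_inv_def by simp
  have "1 + (tau_inv t)\<^sup>2 = 1 / (1 - t)"
    unfolding square using assms by (simp add: field_simps)
  then show "tau (tau_inv t) = t" "h t = phi (tau_inv t)"
    unfolding tau_def phi_def h_def chi_def square
    using assms odds by (simp_all add: powr_half_sqrt tau_inv_def field_simps)
  show "0 \<le> tau_inv t" "tau_inv t \<le> 1"
    using odds unfolding tau_inv_def by auto
qed

lemma phi_nonneg: "x \<le> 1 \<Longrightarrow> 0 \<le> phi x"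
  unfolding phi_def psi_def using one_plus_square_pos[of x] by simp

lemma phi_le_psi: "0 \<le> x \<Longrightarrow> phi x \<le> psi"
  unfolding phi_def psi_def using one_plus_square_pos[of x]
  by (simp add: field_simps)

lemma phi_antitone:
  assumes "0 \<le> u" "u \<le> v" "v \<le> 1"
  shows "phi v \<le> phi u"
proof -
  have "(psi - v) * (1 + u\<^sup>2) \<le> (psi - u) * (1 + v\<^sup>2)"
  proof -
    have "u * v \<le> 1"
      using assms by (simp add: mult_le_one)
    moreover have "0 \<le> psi * (u + v)"
      using assms by (simp add: psi_def)
    ultimately have "0 \<le> psi * (u + v) + 1 - u * v"
      by linarith
    then have "0 \<le> (v - u) * (psi * (u + v) + 1 - u * v)"
      using assms by simp
    also have "\<dots> = (psi - u) * (1 + v\<^sup>2) - (psi - v) * (1 + u\<^sup>2)"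
      by algebra
    finally show ?thesis
      by simp
  qed
  then show ?thesis
    unfolding phi_def using one_plus_square_pos[of u] one_plus_square_pos[of v]
    by (simp add: divide_simps mult.commute)
qed

lemma ln_tau_has_real_derivative:
  "0 < x \<Longrightarrow> ((\<lambda>x. ln (tau x)) has_real_derivative 2 / (x * (1 + x\<^sup>2))) (at x)"
  unfolding tau_def using one_plus_square_pos[of x]
  by (auto intro!: derivative_eq_intros simp: divide_simps) algebra

lemma phi_has_real_derivative:
  "0 < x \<Longrightarrow> (phi has_real_derivative phi_slope x * (2 / (x * (1 + x\<^sup>2)))) (at x)"
  unfolding phi_def phi_slope_def using one_plus_square_pos[of x]
  by (auto intro!: derivative_eq_intros simp: divide_simps) algebra

lemma phi_slope_has_real_derivative:
  "(phi_slope has_real_derivative (x^4 + 4 * x\<^sup>2 - 4 * psi * x - 1) / (2 * (1 + x\<^sup>2)\<^sup>2)) (at x)"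
  unfolding phi_slope_def using one_plus_square_pos[of x]
  by (auto intro!: derivative_eq_intros simp: divide_simps) algebra

text \<open>Equivalently, \<open>phi\<close> is a concave function of \<open>ln (tau x)\<close> on \<open>[0, 1]\<close>.\<close>
lemma phi_slope_antitone:
  assumes "0 \<le> u" "u \<le> v" "v \<le> 1"
  shows "phi_slope v \<le> phi_slope u"
proof (rule DERIV_nonpos_imp_nonincreasing[OF assms(2)])
  fix z assume z: "u \<le> z" "z \<le> v"
  then have z01: "0 \<le> z" "z \<le> 1"
    using assms by auto
  then have "z^4 \<le> z\<^sup>2" "z\<^sup>2 \<le> z"
    using power_decreasing[of 2 4 z] by (auto simp: power2_eq_square mult_left_le)
  then have "z^4 + 4 * z\<^sup>2 - 4 * psi * z - 1 \<le> 0"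
    using z01 unfolding psi_def by linarith
  then have "(z^4 + 4 * z\<^sup>2 - 4 * psi * z - 1) / (2 * (1 + z\<^sup>2)\<^sup>2) \<le> 0"
    using one_plus_square_pos[of z] by (intro divide_nonpos_pos) auto
  then show "\<exists>d. (phi_slope has_real_derivative d) (at z) \<and> d \<le> 0"
    using phi_slope_has_real_derivative by blast
qed

lemma phi_ln_tau_has_real_derivative:
  assumes "0 < z"
  shows "((\<lambda>z. A * phi z - B * ln (tau z)) has_real_derivative
    (A * phi_slope z - B) * (2 / (z * (1 + z\<^sup>2)))) (at z)"
proof -
  have "((\<lambda>z. A * phi z - B * ln (tau z)) has_real_derivative
      A * (phi_slope z * (2 / (z * (1 + z\<^sup>2)))) - B * (2 / (z * (1 + z\<^sup>2)))) (at z)"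
    using assms by (intro DERIV_diff DERIV_cmult phi_has_real_derivative ln_tau_has_real_derivative)
  then show ?thesis
    by (simp only: left_diff_distrib mult.assoc)
qed

lemma phi_le_tangent:
  assumes "0 < x" "x \<le> 1" "0 < \<xi>" "\<xi> \<le> 1"
  shows "phi x \<le> phi \<xi> + phi_slope \<xi> * (ln (tau x) - ln (tau \<xi>))"
proof -
  have "phi x - phi_slope \<xi> * ln (tau x) \<le> phi \<xi> - phi_slope \<xi> * ln (tau \<xi>)"
  proof (rule le_at_zero_of_factor[where F = "\<lambda>z. phi z - phi_slope \<xi> * ln (tau z)"
        and g = "\<lambda>z. phi_slope z - phi_slope \<xi>" and p = "\<lambda>z. 2 / (z * (1 + z\<^sup>2))"
        and a = "min x \<xi>" and b = 1])
    show "((\<lambda>z. phi z - phi_slope \<xi> * ln (tau z)) has_real_derivative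
        (phi_slope z - phi_slope \<xi>) * (2 / (z * (1 + z\<^sup>2)))) (at z)"
      if "min x \<xi> \<le> z" "z \<le> 1" for z
      using that assms phi_ln_tau_has_real_derivative[of z 1 "phi_slope \<xi>"] by simp
    show "0 < 2 / (z * (1 + z\<^sup>2))" if "min x \<xi> \<le> z" "z \<le> 1" for z
      using that assms one_plus_square_pos[of z] by auto
    show "phi_slope v - phi_slope \<xi> \<le> phi_slope u - phi_slope \<xi>"
      if "min x \<xi> \<le> u" "u \<le> v" "v \<le> 1" for u v
      using that assms phi_slope_antitone[of u v] by auto
  qed (use assms in auto)
  then show ?thesis
    by (simp add: algebra_simps)
qed

lemma phi_ln_tau_min_endpoints_le:
  assumes "0 \<le> A" "0 < a" "a \<le> y" "y \<le> b" "b \<le> 1"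
  shows "min (A * phi a - B * ln (tau a)) (A * phi b - B * ln (tau b)) \<le> A * phi y - B * ln (tau y)"
proof (rule min_endpoints_le[where g = "\<lambda>z. A * phi_slope z - B"
      and p = "\<lambda>z. 2 / (z * (1 + z\<^sup>2))" and a = a and b = b])
  show "((\<lambda>z. A * phi z - B * ln (tau z)) has_real_derivative
      (A * phi_slope z - B) * (2 / (z * (1 + z\<^sup>2)))) (at z)" if "a \<le> z" "z \<le> b" for z
    using that assms by (intro phi_ln_tau_has_real_derivative) auto
  show "0 < 2 / (z * (1 + z\<^sup>2))" if "a \<le> z" "z \<le> b" for z
    using that assms one_plus_square_pos[of z] by auto
  show "A * phi_slope v - B \<le> A * phi_slope u - B" if "a \<le> u" "u \<le> v" "v \<le> b" for u v
    using that assms phi_slope_antitone[of u v] by (simp add: mult_left_mono)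
qed (use assms in auto)

lemma
  fixes x :: "'a \<Rightarrow> real"
  assumes "finite I" "\<forall>j\<in>I. 0 \<le> x j" "0 < y" "(\<Prod>j\<in>I. tau (x j)) = tau y ^ n"
  shows pos_of_prod_tau_eq_power: "\<forall>j\<in>I. 0 < x j"
    and sum_ln_tau_eq_of_prod_tau_eq_power: "(\<Sum>j\<in>I. ln (tau (x j))) = n * ln (tau y)"
proof -
  have "(\<Prod>j\<in>I. tau (x j)) \<noteq> 0"
    using assms(3,4) tau_pos[of y] by simp
  then have nonzero: "\<forall>j\<in>I. tau (x j) \<noteq> 0"
    using assms(1) by simp
  then show "\<forall>j\<in>I. 0 < x j"
    using assms(2) tau_eq_zero_iff by force
  have "(\<Sum>j\<in>I. ln (tau (x j))) = ln (\<Prod>j\<in>I. tau (x j))"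
    using assms(1) nonzero by (simp add: ln_prod)
  also have "\<dots> = n * ln (tau y)"
    using assms(3,4) tau_pos[of y] by (simp add: ln_realpow)
  finally show "(\<Sum>j\<in>I. ln (tau (x j))) = n * ln (tau y)" .
qed

lemma sum_phi_le_of_prod_tau_eq_power:
  fixes x :: "'a \<Rightarrow> real"
  assumes "finite I" "\<forall>j\<in>I. 0 \<le> x j \<and> x j \<le> 1" "0 \<le> y" "y \<le> 1"
    and "(\<Prod>j\<in>I. tau (x j)) = tau y ^ card I"
  shows "(\<Sum>j\<in>I. phi (x j)) \<le> card I * phi y"
proof (cases "y = 0")
  case True
  have "(\<Sum>j\<in>I. phi (x j)) \<le> (\<Sum>j\<in>I. psi)"
    using assms(2) phi_le_psi by (intro sum_mono) auto
  then show ?thesis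
    using True by (simp add: phi_def)
next
  case False
  with assms(3) have "0 < y"
    by simp
  have nonneg: "\<forall>j\<in>I. 0 \<le> x j"
    using assms(2) by simp
  note pos = pos_of_prod_tau_eq_power[OF assms(1) nonneg \<open>0 < y\<close> assms(5)]
  note sum_ln = sum_ln_tau_eq_of_prod_tau_eq_power[OF assms(1) nonneg \<open>0 < y\<close> assms(5)]
  have "(\<Sum>j\<in>I. phi (x j)) \<le> (\<Sum>j\<in>I. phi y + phi_slope y * (ln (tau (x j)) - ln (tau y)))"
    using pos assms(2,4) \<open>0 < y\<close> by (intro sum_mono phi_le_tangent) auto
  also have "\<dots> = card I * phi y + phi_slope y * ((\<Sum>j\<in>I. ln (tau (x j))) - card I * ln (tau y))"
    by (simp add: sum.distrib sum_subtractf flip: sum_distrib_left)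
  also have "\<dots> = card I * phi y"
    using sum_ln by simp
  finally show ?thesis .
qed

lemma weighted_sum_phi_le_near_zero:
  fixes c x :: "'a \<Rightarrow> real"
  assumes "\<forall>j\<in>I. 0 \<le> c j \<and> 0 \<le> x j" "psi * (\<Sum>j\<in>I. c j) \<le> M * phi y\<^sub>0"
    and "0 \<le> y" "y \<le> y\<^sub>0" "y\<^sub>0 \<le> 1" "0 \<le> M"
  shows "(\<Sum>j\<in>I. c j * phi (x j)) \<le> M * phi y"
proof -
  have "(\<Sum>j\<in>I. c j * phi (x j)) \<le> (\<Sum>j\<in>I. c j * psi)"
    using assms(1) phi_le_psi by (intro sum_mono mult_left_mono) auto
  also have "\<dots> = psi * (\<Sum>j\<in>I. c j)"
    by (simp add: sum_distrib_left mult.commute)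
  also have "\<dots> \<le> M * phi y\<^sub>0"
    by (fact assms(2))
  also have "\<dots> \<le> M * phi y"
    using assms(3-6) phi_antitone by (intro mult_left_mono) auto
  finally show ?thesis .
qed

lemma weighted_phi_le_tangent_bound:
  assumes "0 \<le> c" "0 < x" "x \<le> 1" "0 < \<xi>" "\<xi> \<le> 1" "\<mu> \<le> c * phi_slope \<xi>"
  shows "c * phi x - \<mu> * ln (tau x)
    \<le> c * phi \<xi> - \<mu> * ln (tau \<xi>) + (c * phi_slope \<xi> - \<mu>) * ln_upper (1 / (2 * tau \<xi>))"
proof -
  have tangent: "c * phi x \<le> c * (phi \<xi> + phi_slope \<xi> * (ln (tau x) - ln (tau \<xi>)))"
    using assms by (intro mult_left_mono phi_le_tangent) auto
  have "ln (tau x) \<le> ln (1 / 2)"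
    using assms tau_pos[of x] tau_le_half[of x] by simp
  then have "ln (tau x) - ln (tau \<xi>) \<le> ln (1 / (2 * tau \<xi>))"
    using assms tau_pos[of \<xi>] by (simp add: ln_div ln_mult)
  also have "\<dots> \<le> ln_upper (1 / (2 * tau \<xi>))"
    using assms tau_pos[of \<xi>] tau_le_half[of \<xi>] by (intro ln_le_ln_upper) (simp add: field_simps)
  finally have "(c * phi_slope \<xi> - \<mu>) * (ln (tau x) - ln (tau \<xi>))
      \<le> (c * phi_slope \<xi> - \<mu>) * ln_upper (1 / (2 * tau \<xi>))"
    using assms(6) by (intro mult_left_mono) auto
  with tangent show ?thesis
    by (simp add: algebra_simps)
qed

lemma ln_lower_tau_power_div_prod_le:
  fixes \<xi> :: "'a \<Rightarrow> real"
  assumes "finite I" "\<forall>j\<in>I. 0 < \<xi> j" "0 < e"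
  shows "ln_lower (tau e ^ n / (\<Prod>j\<in>I. tau (\<xi> j))) \<le> n * ln (tau e) - (\<Sum>j\<in>I. ln (tau (\<xi> j)))"
proof -
  have tau_\<xi>: "\<forall>j\<in>I. 0 < tau (\<xi> j)"
    using assms(2) tau_pos by auto
  then have "ln (\<Prod>j\<in>I. tau (\<xi> j)) = (\<Sum>j\<in>I. ln (tau (\<xi> j)))"
    using assms(1) by (intro ln_prod) auto
  moreover have "0 < (\<Prod>j\<in>I. tau (\<xi> j))" "0 < tau e"
    using tau_\<xi> tau_pos assms(3) by (auto intro: prod_pos)
  ultimately show ?thesis
    using ln_lower_le_ln[of "tau e ^ n / (\<Prod>j\<in>I. tau (\<xi> j))"] by (simp add: ln_div ln_realpow)
qed

text \<open>Each summand, shifted by \<open>- \<mu> ln (tau x\<^sub>j)\<close>, is bounded on its own; the constraint turns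
  the sum of the shifts into \<open>- \<mu> w ln (tau y)\<close>, and the resulting function of \<open>y\<close> is
  quasi-concave, so its minimum over \<open>[a, b]\<close> is attained at an endpoint.\<close>
lemma weighted_sum_phi_le_by_multiplier:
  fixes c \<xi> x :: "'a \<Rightarrow> real" and I :: "'a set" and \<mu> :: real
  defines "B \<equiv> \<Sum>j\<in>I. c j * phi (\<xi> j) + (c j * phi_slope (\<xi> j) - \<mu>) * ln_upper (1 / (2 * tau (\<xi> j)))"
  assumes "finite I"
    and certificate: "\<forall>j\<in>I. 0 \<le> c j \<and> 0 < \<xi> j \<and> \<xi> j \<le> 1 \<and> \<mu> \<le> c j * phi_slope (\<xi> j)" "\<mu> \<le> 0"
    and x: "\<forall>j\<in>I. 0 < x j \<and> x j \<le> 1"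
    and sum_ln: "(\<Sum>j\<in>I. ln (tau (x j))) = card I * ln (tau y)"
    and y: "0 < a" "a \<le> y" "y \<le> b" "b \<le> 1"
    and "0 \<le> M"
    and at_a: "B \<le> M * phi a - \<mu> * ln_lower (tau a ^ card I / (\<Prod>j\<in>I. tau (\<xi> j)))"
    and at_b: "B \<le> M * phi b - \<mu> * ln_lower (tau b ^ card I / (\<Prod>j\<in>I. tau (\<xi> j)))"
  shows "(\<Sum>j\<in>I. c j * phi (x j)) \<le> M * phi y"
proof -
  define S where "S = (\<Sum>j\<in>I. ln (tau (\<xi> j)))"
  have "(\<Sum>j\<in>I. c j * phi (x j) - \<mu> * ln (tau (x j)))
      \<le> (\<Sum>j\<in>I. c j * phi (\<xi> j) - \<mu> * ln (tau (\<xi> j))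
        + (c j * phi_slope (\<xi> j) - \<mu>) * ln_upper (1 / (2 * tau (\<xi> j))))"
    using certificate x by (intro sum_mono weighted_phi_le_tangent_bound) auto
  then have sum_le: "(\<Sum>j\<in>I. c j * phi (x j)) - \<mu> * (card I * ln (tau y)) \<le> B - \<mu> * S"
    unfolding B_def S_def sum_ln[symmetric]
    by (simp add: sum.distrib sum_subtractf sum_distrib_left algebra_simps)
  have at_endpoint: "B - \<mu> * S \<le> M * phi e - (\<mu> * card I) * ln (tau e)"
    if "0 < e" "B \<le> M * phi e - \<mu> * ln_lower (tau e ^ card I / (\<Prod>j\<in>I. tau (\<xi> j)))" for e
  proof -
    have "- \<mu> * ln_lower (tau e ^ card I / (\<Prod>j\<in>I. tau (\<xi> j))) \<le> - \<mu> * (card I * ln (tau e) - S)"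
      using \<open>\<mu> \<le> 0\<close> certificate \<open>finite I\<close> \<open>0 < e\<close> unfolding S_def
      by (intro mult_left_mono ln_lower_tau_power_div_prod_le) auto
    with that(2) show ?thesis
      by (simp add: algebra_simps)
  qed
  have "min (M * phi a - (\<mu> * card I) * ln (tau a)) (M * phi b - (\<mu> * card I) * ln (tau b))
      \<le> M * phi y - (\<mu> * card I) * ln (tau y)"
    using y \<open>0 \<le> M\<close> by (intro phi_ln_tau_min_endpoints_le)
  moreover have "B - \<mu> * S \<le> min (M * phi a - (\<mu> * card I) * ln (tau a)) (M * phi b - (\<mu> * card I) * ln (tau b))"
    using at_endpoint[OF _ at_a] at_endpoint[OF _ at_b] y by simp
  ultimately have "B - \<mu> * S \<le> M * phi y - (\<mu> * card I) * ln (tau y)"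
    by (rule order_trans[rotated])
  with sum_le show ?thesis
    by (simp add: algebra_simps)
qed

definition weight_bound :: "nat \<Rightarrow> real" where
  "weight_bound j =
    (if j = 2 then 291641/262144 else if j = 3 then 1297827/1048576 else if j = 4 then 360965/262144
     else 1)"

lemma weight_bound_pos: "0 < weight_bound j"
  by (simp add: weight_bound_def)

lemma delta_weight_le_weight_bound:
  assumes "1 \<le> j" "j \<le> 4"
  shows "1 / delta ^ ((j - 1) * (Delta - 1)) \<le> weight_bound j"
proof -
  have "j = 1 \<or> j = 2 \<or> j = 3 \<or> j = 4"
    using assms by auto
  then show ?thesis
    by (auto simp: weight_bound_def delta_def Delta_def power_divide)
qed

lemma K_nonneg: "0 \<le> K w"
  by (simp add: K_def delta_def)

lemma K_2: "K 2 = 1069/1000" and K_3: "K 3 = 1160/1000" and K_4: "K 4 = 1225/1000"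
  by (simp_all add: K_def)

text \<open>A certificate \<open>(\<xi>s, \<mu>, q)\<close> for the cell \<open>[a, b]\<close> consists of the tangent points, the
  multiplier, and a rational \<open>q\<close> separating the two sides of the final comparison, so that each
  exact comparison is against a single rational.\<close>
fun certifies :: "nat \<Rightarrow> real \<Rightarrow> real \<Rightarrow> real list \<times> real \<times> real \<Rightarrow> bool" where
  "certifies w a b (\<xi>s, \<mu>, q) \<longleftrightarrow>
    (let \<xi> = \<lambda>j. \<xi>s ! (j - 1);
         B = (\<Sum>j=1..w. weight_bound j * phi (\<xi> j)
               + (weight_bound j * phi_slope (\<xi> j) - \<mu>) * ln_upper (1 / (2 * tau (\<xi> j))));
         P = (\<Prod>j=1..w. tau (\<xi> j))
     in 0 < a \<and> a \<le> b \<and> b \<le> 1 \<and> \<mu> \<le> 0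
        \<and> (\<forall>j\<in>{1..w}. 0 < \<xi> j \<and> \<xi> j \<le> 1 \<and> \<mu> \<le> weight_bound j * phi_slope (\<xi> j))
        \<and> B \<le> q \<and> q \<le> real w * K w * phi a - \<mu> * ln_lower (tau a ^ w / P)
        \<and> q \<le> real w * K w * phi b - \<mu> * ln_lower (tau b ^ w / P))"

lemma weighted_sum_phi_le_if_certifies:
  assumes "certifies w a b (\<xi>s, \<mu>, q)" "a \<le> y" "y \<le> b"
    and "\<forall>j\<in>{1..w}. 0 < x j \<and> x j \<le> 1"
    and "(\<Sum>j=1..w. ln (tau (x j))) = w * ln (tau y)"
  shows "(\<Sum>j=1..w. weight_bound j * phi (x j)) \<le> real w * K w * phi y"
  using assms
  by (intro weighted_sum_phi_le_by_multiplier[where \<xi> = "\<lambda>j. \<xi>s ! (j - 1)" and \<mu> = \<mu>])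
    (auto simp: Let_def weight_bound_pos less_imp_le K_nonneg)

fun certified_from :: "nat \<Rightarrow> real list \<Rightarrow> (real list \<times> real \<times> real) list \<Rightarrow> bool" where
  "certified_from w (a # b # bs) (c # cs) \<longleftrightarrow> certifies w a b c \<and> certified_from w (b # bs) cs"
| "certified_from w [a] [] \<longleftrightarrow> True"
| "certified_from w _ _ \<longleftrightarrow> False"

lemma weighted_sum_phi_le_if_certified_from:
  assumes "certified_from w ys cs" "hd ys < y" "y \<le> last ys"
    and "\<forall>j\<in>{1..w}. 0 < x j \<and> x j \<le> 1"
    and "(\<Sum>j=1..w. ln (tau (x j))) = w * ln (tau y)"
  shows "(\<Sum>j=1..w. weight_bound j * phi (x j)) \<le> real w * K w * phi y"
  using assms
proof (induction w ys cs rule: certified_from.induct)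
  case (1 w a b bs c cs)
  obtain \<xi>s \<mu> q where "c = (\<xi>s, \<mu>, q)"
    by (cases c) auto
  with 1 show ?case
    using weighted_sum_phi_le_if_certifies[of w a b \<xi>s \<mu> q y x] by (cases "y \<le> b") auto
qed auto

definition breakpoints :: "nat \<Rightarrow> real list" where
  "breakpoints w =
    (if w = 2 then [15/1024, 33/1024, 65/1024, 113/1024, 11/64, 127/512, 347/1024, 227/512,
                    577/1024, 717/1024, 211/256, 457/512, 243/256, 1]
     else if w = 3 then [23/512, 23/256, 81/512, 129/512, 191/512, 269/512, 733/1024, 459/512, 1]
     else [11/256, 79/1024, 65/512, 199/1024, 287/1024, 395/1024, 525/1024, 339/512, 805/1024,
           885/1024, 961/1024, 1])"

definition certificates :: "nat \<Rightarrow> (real list \<times> real \<times> real) list" where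
  "certificates w =
    (if w = 2 then
      [([101/4096, 365/16384], - 109925/8388608, 2897718947/1073741824),
       ([823/16384, 747/16384], - 237075/8388608, 2834533553/1073741824),
       ([1491/16384, 85/1024], - 930115/16777216, 1365774441/536870912),
       ([2417/16384, 553/4096], - 1649333/16777216, 80560413/33554432),
       ([1797/8192, 3293/16384], - 2672479/16777216, 37016079/16777216),
       ([1257/4096, 4599/16384], - 4009209/16777216, 2103387895/1073741824),
       ([1681/4096, 6111/16384], - 2797061/8388608, 223706457/134217728),
       ([1089/2048, 3909/8192], - 7301631/16777216, 11278971/8388608),
       ([2769/4096, 2425/4096], - 139919/262144, 543026911/536870912),
       ([13685/16384, 11461/16384], - 10210929/16777216, 96945973/134217728),
       ([7979/8192, 3137/4096], - 10833269/16777216, 36362023/67108864),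
       ([1, 13975/16384], - 11474317/16777216, 117543659/268435456),
       ([1, 3893/4096], - 11966585/16777216, 380450691/1073741824)]
     else if w = 3 then
      [([1213/16384, 69/1024, 1005/16384], - 366645/8388608, 2208432673/536870912),
       ([1111/8192, 2033/16384, 929/8192], - 372709/4194304, 4169020673/1073741824),
       ([917/4096, 3361/16384, 3079/16384], - 2739727/16777216, 3783285585/1073741824),
       ([701/2048, 5/16, 4681/16384], - 1139091/4194304, 3241541819/1073741824),
       ([8163/16384, 1839/4096, 6663/16384], - 3427457/8388608, 2554499229/1073741824),
       ([11669/16384, 10135/16384, 8975/16384], - 4646643/8388608, 1776410441/1073741824),
       ([1, 6537/8192, 11089/16384], - 5546323/8388608, 1095458819/1073741824),
       ([1, 1, 1759/2048], - 6403019/8388608, 677606991/1073741824)]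
     else
      [([567/8192, 129/2048, 939/16384, 853/16384], - 679531/16777216, 6278026099/1073741824),
       ([479/4096, 875/8192, 1599/16384, 1459/16384], - 312217/4194304, 3011626093/536870912),
       ([3003/16384, 2751/16384, 315/2048, 2307/16384], - 134193/1048576, 2822372037/536870912),
       ([2219/8192, 127/512, 3723/16384, 3411/16384], - 3453045/16777216, 2558227545/536870912),
       ([49/128, 357/1024, 5213/16384, 4765/16384], - 5178059/16777216, 554123643/134217728),
       ([8617/16384, 7739/16384, 6993/16384, 6347/16384], - 7226197/16777216, 3614352341/1073741824),
       ([5881/8192, 5101/8192, 2257/4096, 8081/16384], - 9344069/16777216, 679633057/268435456),
       ([8093/8192, 6313/8192, 5399/8192, 4745/8192], - 10873605/16777216, 979083985/536870912),
       ([1, 15919/16384, 6267/8192, 10737/16384], - 6022075/8388608, 739065439/536870912),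
       ([1, 1, 7491/8192, 6073/8192], - 13140379/16777216, 1152358953/1073741824),
       ([1, 1, 1, 14535/16384], - 3611953/4194304, 881169965/1073741824)])"

lemma certified_from_2: "certified_from 2 (breakpoints 2) (certificates 2)"
  by (simp add: breakpoints_def certificates_def Let_def K_2)
    (simp add: eval_nat_numeral weight_bound_def phi_def phi_slope_def tau_def psi_def
      ln_lower_def ln_upper_def power_divide)

lemma certified_from_3: "certified_from 3 (breakpoints 3) (certificates 3)"
  by (simp add: breakpoints_def certificates_def Let_def K_3)
    (simp add: eval_nat_numeral weight_bound_def phi_def phi_slope_def tau_def psi_def
      ln_lower_def ln_upper_def power_divide)

lemma certified_from_4: "certified_from 4 (breakpoints 4) (certificates 4)"
  by (simp add: breakpoints_def certificates_def Let_def K_4)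
    (simp add: eval_nat_numeral weight_bound_def phi_def phi_slope_def tau_def psi_def
      ln_lower_def ln_upper_def power_divide)

lemma
  assumes "w \<in> {2, 3, 4}"
  shows hd_breakpoints_pos: "0 < hd (breakpoints w)"
    and hd_breakpoints_le_one: "hd (breakpoints w) \<le> 1"
    and last_breakpoints: "last (breakpoints w) = 1"
    and weight_bound_sum_le: "psi * (\<Sum>j=1..w. weight_bound j) \<le> real w * K w * phi (hd (breakpoints w))"
  using assms
  by (auto simp: breakpoints_def K_2 K_3 K_4)
    (auto simp: weight_bound_def phi_def psi_def eval_nat_numeral)

lemma weight_bound_sum_phi_le:
  assumes w: "w \<in> {2, 3, 4}"
    and x: "\<forall>j\<in>{1..w}. 0 \<le> x j \<and> x j \<le> 1" and y: "0 \<le> y" "y \<le> 1"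
    and prod: "(\<Prod>j=1..w. tau (x j)) = tau y ^ w"
  shows "(\<Sum>j=1..w. weight_bound j * phi (x j)) \<le> real w * K w * phi y"
proof (cases "y \<le> hd (breakpoints w)")
  case True
  then show ?thesis
    using w x y weight_bound_pos K_nonneg hd_breakpoints_le_one weight_bound_sum_le
    by (intro weighted_sum_phi_le_near_zero[where y\<^sub>0 = "hd (breakpoints w)"]) (auto simp: less_imp_le)
next
  case False
  with w hd_breakpoints_pos have "0 < y"
    by force
  have nonneg: "\<forall>j\<in>{1..w}. 0 \<le> x j"
    using x by simp
  have certified: "certified_from w (breakpoints w) (certificates w)"
    using w certified_from_2 certified_from_3 certified_from_4 by auto
  show ?thesis
    using weighted_sum_phi_le_if_certified_from[OF certified] False y(2) w last_breakpoints x
      pos_of_prod_tau_eq_power[OF _ nonneg \<open>0 < y\<close> prod]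
      sum_ln_tau_eq_of_prod_tau_eq_power[OF _ nonneg \<open>0 < y\<close> prod]
    by auto
qed

lemma delta_weight_le_K:
  assumes "1 \<le> j" "j \<le> w" "w \<notin> {2, 3, 4}"
  shows "1 / delta ^ ((j - 1) * (Delta - 1)) \<le> K w"
proof (cases "w = 1")
  case True
  with assms show ?thesis
    by (simp add: K_def)
next
  case False
  with assms have "5 \<le> w"
    by auto
  then have K: "K w = (1 / delta) ^ ((w - 1) * (Delta - 1))"
    by (simp add: K_def)
  have "(1 / delta) ^ ((j - 1) * (Delta - 1)) \<le> (1 / delta) ^ ((w - 1) * (Delta - 1))"
    using assms by (intro power_increasing mult_right_mono) (auto simp: delta_def)
  then show ?thesis
    by (simp add: K power_one_over)
qed

lemma weighted_sum_phi_le: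
  assumes "1 \<le> w"
    and x: "\<forall>j\<in>{1..w}. 0 \<le> x j \<and> x j \<le> 1" and y: "0 \<le> y" "y \<le> 1"
    and prod: "(\<Prod>j=1..w. tau (x j)) = tau y ^ w"
  shows "(\<Sum>j=1..w. 1 / delta ^ ((j - 1) * (Delta - 1)) * phi (x j)) \<le> real w * K w * phi y"
proof (cases "w \<in> {2, 3, 4}")
  case True
  have "(\<Sum>j=1..w. 1 / delta ^ ((j - 1) * (Delta - 1)) * phi (x j)) \<le> (\<Sum>j=1..w. weight_bound j * phi (x j))"
    using True x by (intro sum_mono mult_right_mono delta_weight_le_weight_bound phi_nonneg) auto
  also have "\<dots> \<le> real w * K w * phi y"
    using True x y prod by (rule weight_bound_sum_phi_le)
  finally show ?thesis .
next
  case False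
  have "(\<Sum>j=1..w. 1 / delta ^ ((j - 1) * (Delta - 1)) * phi (x j)) \<le> (\<Sum>j=1..w. K w * phi (x j))"
    using False x by (intro sum_mono mult_right_mono delta_weight_le_K phi_nonneg) auto
  also have "\<dots> = K w * (\<Sum>j=1..w. phi (x j))"
    by (simp add: sum_distrib_left)
  also have "\<dots> \<le> K w * (real w * phi y)"
    using sum_phi_le_of_prod_tau_eq_power[of "{1..w}" x y] x y prod K_nonneg
    by (intro mult_left_mono) auto
  finally show ?thesis
    by (simp add: algebra_simps)
qed

theorem lemma36:
  fixes w :: nat and t :: "nat \<Rightarrow> real"
  assumes "w \<ge> 1"
    and "\<And>j. j \<in> {1..w} \<Longrightarrow> 0 \<le> t j \<and> t j \<le> 1/2"
  shows "(\<Sum>j=1..w. (1 / delta ^ ((j - 1) * (Delta - 1))) * h (t j))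
           \<le> real w * K w * h (root w (\<Prod>j=1..w. t j))"
proof -
  define G where "G = root w (\<Prod>j=1..w. t j)"
  have t: "\<forall>j\<in>{1..w}. 0 \<le> t j \<and> t j \<le> 1/2"
    using assms(2) by blast
  have "0 \<le> (\<Prod>j=1..w. t j)" "(\<Prod>j=1..w. t j) \<le> (1/2) ^ w"
    using t prod_mono[of "{1..w}" t "\<lambda>_. 1/2"] by (auto intro: prod_nonneg)
  then have G: "0 \<le> G" "G \<le> 1/2" "G ^ w = (\<Prod>j=1..w. t j)"
    using assms(1) real_root_le_iff[of w _ "(1/2) ^ w"] unfolding G_def
    by (auto simp: real_root_power_cancel)
  have "(\<Prod>j=1..w. tau (tau_inv (t j))) = tau (tau_inv G) ^ w"
    using t G by (simp add: tau_tau_inv)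
  then have "(\<Sum>j=1..w. 1 / delta ^ ((j - 1) * (Delta - 1)) * phi (tau_inv (t j)))
      \<le> real w * K w * phi (tau_inv G)"
    using assms(1) t G by (intro weighted_sum_phi_le) (auto simp: tau_inv_nonneg tau_inv_le_one)
  then show ?thesis
    using t G unfolding G_def[symmetric] by (simp add: h_eq_phi_tau_inv)
qed

end
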